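(* Let $x\ge 0$ and $y,z>0$ (the approximation is intended for the regime $x\ll y,z$). Let $a=(y+z)/2$ and $g=\sqrt{yz}$. Then $$R_D(x,y,z)=R_D(0,y,z)+\frac{3\sqrt x}{gz}\left(-1+\frac{\pi\theta}{4}\sqrt{\frac xa}\right),$$ where $\frac{1}{1+\sqrt{x/a}}<\theta<\left(\frac ag\right)^{3/2}\left(1+\frac ya\right)$.
   Context: For $x,y\ge0$ not both zero and $z>0$: $R_D(x,y,z)=\frac32\int_0^\infty[(t+x)(t+y)]^{-1/2}(t+z)^{-3/2}\,dt$. *)

theory Defs
  imports "HOL-Analysis.Analysis"
begin

text \<open>Carlson's symmetric elliptic integral of the second kind,
  R_D(x,y,z) = 3/2 * integral over (0,inf) of ((t+x)(t+y))^(-1/2) (t+z)^(-3/2) dt,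
  for x,y >= 0 not both zero and z > 0 (absolutely convergent improper integral,
  taken here as the Henstock-Kurzweil integral over the half-line).\<close>
definition carlson_RD :: "real \<Rightarrow> real \<Rightarrow> real \<Rightarrow> real" where
  "carlson_RD x y z =
     3 / 2 * integral {0<..} (\<lambda>t. 1 / (sqrt ((t + x) * (t + y)) * (t + z) powr (3/2)))"

end

theory Submission
  imports Defs "HOL-Real_Asymp.Real_Asymp"
begin

(* With w(t) = rd_weight y z t = 1 / (sqrt ((t+y)(t+z)) (t+z)) one has
   R_D(x,y,z) = 3/2 int_0^oo w(t) / sqrt (t+x) dt, hence
   R_D(0,y,z) - R_D(x,y,z) = 3/2 int_0^oo (1/sqrt t - 1/sqrt (t+x)) w(t) dt, where the first factor
   integrates to 2 sqrt x. Replacing w by w(0) = 1/(gz) gives the leading term -3 sqrt x/(gz).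
   The error w(0) - w(t) is bounded above and below by rational functions of t, via
   t + g <= sqrt ((t+y)(t+z)) <= (a/g) t + g, and next to them 1/sqrt t - 1/sqrt (t+x) is replaced
   by its first-order bounds in x. The resulting integrals are elementary (arctan type) and give
   the two bounds on theta. *)

lemma sqrt_mult_sqrt_mult: "u \<ge> 0 \<Longrightarrow> sqrt u * (sqrt u * c) = u * c"
  by (metis mult.assoc real_sqrt_mult_self abs_of_nonneg)

lemma sqrt_pow4: "u \<ge> 0 \<Longrightarrow> sqrt u ^ 4 = u\<^sup>2"
  by (metis power_mult mult_2_right numeral_Bit0 real_sqrt_pow2)

section \<open>Elementary improper integrals on the half-line\<close>

lemma has_integral_Ioi_0_FTC_nonneg:
  fixes f F :: "real \<Rightarrow> real"
  assumes "\<And>t. t > 0 \<Longrightarrow> (F has_real_derivative f t) (at t)"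
    and "\<And>t. t > 0 \<Longrightarrow> isCont f t"
    and "\<And>t. t > 0 \<Longrightarrow> 0 \<le> f t"
    and "(F \<longlongrightarrow> A) (at_right 0)" and "(F \<longlongrightarrow> B) at_top"
  shows "(f has_integral (B - A)) {0<..}"
proof -
  have "set_integrable lborel (einterval 0 \<infinity>) f \<and> (LBINT t=0..\<infinity>. f t) = B - A"
    by (intro conjI interval_integral_FTC_nonneg[of 0 \<infinity> F f])
       (use assms in \<open>auto simp: zero_ereal_def ereal_tendsto_simps\<close>)
  moreover have "einterval 0 \<infinity> = {0::real<..}"
    by (metis einterval_eq_Ici zero_ereal_def)
  ultimately have "set_integrable lborel {0<..} f" "(LINT t:{0<..}|lborel. f t) = B - A"
    by (auto simp: interval_lebesgue_integral_0_infty zero_ereal_def[symmetric])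
  then show ?thesis
    by (metis set_borel_integral_eq_integral integrable_integral)
qed

lemma has_integral_inv_sqrt_diff:
  fixes x :: real assumes x: "x \<ge> 0"
  shows "((\<lambda>t. 1 / sqrt t - 1 / sqrt (t + x)) has_integral 2 * sqrt x) {0<..}"
proof -
  have "((\<lambda>t. 1 / sqrt t - 1 / sqrt (t + x)) has_integral (0 - (- 2 * sqrt x))) {0<..}"
  proof (rule has_integral_Ioi_0_FTC_nonneg[where F = "\<lambda>t. 2 * sqrt t - 2 * sqrt (t + x)"])
    fix t :: real assume t: "t > 0"
    show "((\<lambda>t. 2 * sqrt t - 2 * sqrt (t + x)) has_real_derivative 1 / sqrt t - 1 / sqrt (t + x)) (at t)"
      using t x by (auto intro!: derivative_eq_intros simp: field_simps)
    show "isCont (\<lambda>t. 1 / sqrt t - 1 / sqrt (t + x)) t"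
      using t x by (auto intro!: continuous_intros)
    show "0 \<le> 1 / sqrt t - 1 / sqrt (t + x)"
      using t x by (simp add: frac_le)
  next
    show "((\<lambda>t. 2 * sqrt t - 2 * sqrt (t + x)) \<longlongrightarrow> - 2 * sqrt x) (at_right 0)"
      using x by (auto intro!: tendsto_eq_intros)
    show "((\<lambda>t. 2 * sqrt t - 2 * sqrt (t + x)) \<longlongrightarrow> 0) at_top"
      using x by real_asymp
  qed
  then show ?thesis by simp
qed

lemma has_integral_inv_sqrt_mult_add:
  fixes b :: real assumes b: "b > 0"
  shows "((\<lambda>t. 1 / (sqrt t * (t + b))) has_integral pi / sqrt b) {0<..}"
proof -
  have "((\<lambda>t. 1 / (sqrt t * (t + b))) has_integral (pi / sqrt b - 0)) {0<..}"
  proof (rule has_integral_Ioi_0_FTC_nonneg[where F = "\<lambda>t. 2 / sqrt b * arctan (sqrt t / sqrt b)"])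
    fix t :: real assume t: "t > 0"
    show "((\<lambda>t. 2 / sqrt b * arctan (sqrt t / sqrt b)) has_real_derivative 1 / (sqrt t * (t + b))) (at t)"
      using t b by (auto intro!: derivative_eq_intros simp: power_divide divide_simps)
    show "isCont (\<lambda>t. 1 / (sqrt t * (t + b))) t" "0 \<le> 1 / (sqrt t * (t + b))"
      using t b by (auto intro!: continuous_intros)
  next
    show "((\<lambda>t. 2 / sqrt b * arctan (sqrt t / sqrt b)) \<longlongrightarrow> 0) (at_right 0)"
      using b by (auto intro!: tendsto_eq_intros)
    show "((\<lambda>t. 2 / sqrt b * arctan (sqrt t / sqrt b)) \<longlongrightarrow> pi / sqrt b) at_top"
      using b by real_asymp (simp add: sqrt_def)
  qed
  then show ?thesis by simp
qed

lemma has_integral_inv_sqrt_mult_add_sq: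
  fixes m :: real assumes m: "m > 0"
  shows "((\<lambda>t. 1 / (sqrt t * (t + m)\<^sup>2)) has_integral pi / (2 * m * sqrt m)) {0<..}"
proof -
  define F where "F t = sqrt t / (m * (t + m)) + arctan (sqrt t / sqrt m) / (m * sqrt m)" for t
  have "((\<lambda>t. 1 / (sqrt t * (t + m)\<^sup>2)) has_integral (pi / (2 * m * sqrt m) - 0)) {0<..}"
  proof (rule has_integral_Ioi_0_FTC_nonneg[where F = F])
    fix t :: real assume t: "t > 0"
    show "(F has_real_derivative 1 / (sqrt t * (t + m)\<^sup>2)) (at t)"
      unfolding F_def
      by (insert t m) (rule DERIV_cong, (rule derivative_eq_intros refl | simp)+,
          simp add: power_divide divide_simps, simp add: algebra_simps power2_eq_square sqrt_mult_sqrt_mult)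
    show "isCont (\<lambda>t. 1 / (sqrt t * (t + m)\<^sup>2)) t" "0 \<le> 1 / (sqrt t * (t + m)\<^sup>2)"
      using t m by (auto intro!: continuous_intros)
  next
    show "(F \<longlongrightarrow> 0) (at_right 0)"
      unfolding F_def using m by (auto intro!: tendsto_eq_intros)
    show "(F \<longlongrightarrow> pi / (2 * m * sqrt m)) at_top"
      unfolding F_def using m by real_asymp (simp add: sqrt_def field_simps)
  qed
  then show ?thesis by simp
qed

lemma has_integral_sqrt_div_add_mult_add:
  fixes x c :: real assumes x: "x > 0" and c: "c > 0"
  shows "((\<lambda>t. sqrt t / ((t + x) * (t + c))) has_integral pi / (sqrt x + sqrt c)) {0<..}"
proof (cases "x = c")
  case True
  define F where "F t = arctan (sqrt t / sqrt c) / sqrt c - sqrt t / (t + c)" for t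
  have "((\<lambda>t. sqrt t / ((t + c) * (t + c))) has_integral (pi / (2 * sqrt c) - 0)) {0<..}"
  proof (rule has_integral_Ioi_0_FTC_nonneg[where F = F])
    fix t :: real assume t: "t > 0"
    show "(F has_real_derivative sqrt t / ((t + c) * (t + c))) (at t)"
      unfolding F_def
      by (insert t c) (rule DERIV_cong, (rule derivative_eq_intros refl | simp)+,
          simp add: power_divide divide_simps, simp add: algebra_simps power2_eq_square)
    show "isCont (\<lambda>t. sqrt t / ((t + c) * (t + c))) t" "0 \<le> sqrt t / ((t + c) * (t + c))"
      using t c by (auto intro!: continuous_intros)
  next
    show "(F \<longlongrightarrow> 0) (at_right 0)"
      unfolding F_def using c by (auto intro!: tendsto_eq_intros)
    show "(F \<longlongrightarrow> pi / (2 * sqrt c)) at_top"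
      unfolding F_def using c by real_asymp (simp add: sqrt_def field_simps)
  qed
  then show ?thesis using True by simp
next
  case False
  define F where "F t = 2 / (c - x) * (sqrt c * arctan (sqrt t / sqrt c) - sqrt x * arctan (sqrt t / sqrt x))" for t
  have "((\<lambda>t. sqrt t / ((t + x) * (t + c))) has_integral (pi * (sqrt c - sqrt x) / (c - x) - 0)) {0<..}"
  proof (rule has_integral_Ioi_0_FTC_nonneg[where F = F])
    fix t :: real assume t: "t > 0"
    show "(F has_real_derivative sqrt t / ((t + x) * (t + c))) (at t)"
      unfolding F_def
      by (insert t x c False) (rule DERIV_cong, (rule derivative_eq_intros refl | simp)+,
          simp add: power_divide divide_simps, simp add: algebra_simps power2_eq_square)
    show "isCont (\<lambda>t. sqrt t / ((t + x) * (t + c))) t" "0 \<le> sqrt t / ((t + x) * (t + c))"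
      using t x c by (auto intro!: continuous_intros)
  next
    show "(F \<longlongrightarrow> 0) (at_right 0)"
      unfolding F_def using x c False by (auto intro!: tendsto_eq_intros)
    show "(F \<longlongrightarrow> pi * (sqrt c - sqrt x) / (c - x)) at_top"
      unfolding F_def using x c False by real_asymp (simp add: sqrt_def algebra_simps)
  qed
  moreover have "c - x = (sqrt c - sqrt x) * (sqrt x + sqrt c)"
    using x c by (simp add: algebra_simps)
  ultimately show ?thesis
    using False x c by simp
qed

lemma inv_sqrt_diff_bounds:
  fixes t x :: real assumes t: "t > 0" and x: "x \<ge> 0"
  shows "0 \<le> 1 / sqrt t - 1 / sqrt (t + x)"
    and "x / (2 * sqrt t * (t + x)) \<le> 1 / sqrt t - 1 / sqrt (t + x)"
    and "1 / sqrt t - 1 / sqrt (t + x) \<le> x / (2 * t * sqrt t)"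
proof -
  define u v where "u = sqrt t" and "v = sqrt (t + x)"
  have u: "u > 0" "u * u = t" and v: "v > 0" "v * v = t + x" and uv: "u \<le> v"
    using t x by (auto simp: u_def v_def)
  have "x = (v - u) * (u + v)"
    using u v by (simp add: algebra_simps)
  then have "x / (u * v * (u + v)) = (v - u) / (u * v)"
    using u v by (simp add: nonzero_mult_divide_mult_cancel_right)
  also have "\<dots> = 1 / u - 1 / v"
    using u(1) v(1) by (simp add: field_simps)
  finally have eq: "1 / u - 1 / v = x / (u * v * (u + v))" ..
  have pos: "0 < u * v * (u + v)"
    using u v by simp
  have upper: "u * v * (u + v) \<le> 2 * u * (t + x)"
    using u v uv by (simp flip: v(2))
  have lower: "2 * t * u \<le> u * v * (u + v)"
  proof -
    have "u * (u + u) \<le> v * (u + v)"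
      using u v uv by (intro mult_mono add_mono) auto
    then have "u * (u * (u + u)) \<le> u * (v * (u + v))"
      using u by (intro mult_left_mono) auto
    then show ?thesis
      by (simp add: algebra_simps flip: u(2))
  qed
  show "0 \<le> 1 / sqrt t - 1 / sqrt (t + x)"
    unfolding u_def[symmetric] v_def[symmetric] eq using pos x by simp
  show "x / (2 * sqrt t * (t + x)) \<le> 1 / sqrt t - 1 / sqrt (t + x)"
    unfolding u_def[symmetric] v_def[symmetric] eq
    using upper pos t x u v by (intro divide_left_mono mult_pos_pos) auto
  show "1 / sqrt t - 1 / sqrt (t + x) \<le> x / (2 * t * sqrt t)"
    unfolding u_def[symmetric] v_def[symmetric] eq
    using lower pos t x u v by (intro divide_left_mono mult_pos_pos) auto
qed

lemma add_sqrt_mult_sq_le: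
  fixes t y z :: real assumes "t \<ge> 0" "y \<ge> 0" "z \<ge> 0"
  shows "(t + sqrt (y * z))\<^sup>2 \<le> (t + y) * (t + z)"
proof -
  have "2 * sqrt (y * z) * t \<le> (y + z) * t"
    using arith_geo_mean_sqrt[of y z] assms by (intro mult_right_mono) auto
  then show ?thesis
    using assms by (simp add: power2_eq_square algebra_simps)
qed

lemma sqrt_mult_add_le:
  fixes t y z :: real assumes t: "t \<ge> 0" and y: "y > 0" and z: "z > 0"
  defines "a \<equiv> (y + z) / 2" and "g \<equiv> sqrt (y * z)"
  shows "sqrt ((t + y) * (t + z)) \<le> a / g * t + g"
proof (rule real_le_lsqrt)
  have g: "g > 0" "g * g = y * z"
    using y z by (auto simp: g_def)
  have "1 \<le> a / g"
    using arith_geo_mean_sqrt[of y z] y z g by (simp add: a_def g_def)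
  then have "1 * (t * t) \<le> (a / g)\<^sup>2 * (t * t)"
    by (intro mult_right_mono one_le_power) auto
  moreover have "(a / g * t + g)\<^sup>2 = (a / g)\<^sup>2 * (t * t) + (y + z) * t + y * z"
    using g by (simp add: power2_eq_square field_simps a_def)
  ultimately show "(t + y) * (t + z) \<le> (a / g * t + g)\<^sup>2"
    by (simp add: algebra_simps)
  show "0 \<le> a / g * t + g"
    using t g y z by (simp add: a_def)
qed

lemma inv_mult_add_le_frac:
  fixes t g z c :: real
  assumes t: "t \<ge> 0" and g: "g > 0" and z: "z > 0" and c: "c > 0" and c_ge: "g * z / (g + z) \<le> c"
  shows "1 / ((t + g) * (t + z)) \<le> 1 / (g * z) * (c / (t + c))"
proof -
  have "g * z * t \<le> c * (g + z) * t"
    using c_ge g z t by (intro mult_right_mono) (simp_all add: pos_divide_le_eq)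
  moreover have "0 \<le> c * t * t"
    using c t by simp
  ultimately have "g * z * (t + c) \<le> c * ((t + g) * (t + z))"
    by (simp add: algebra_simps)
  then show ?thesis
    using t g z c by (simp add: divide_simps add_pos_nonneg)
qed

lemma one_sub_frac_le:
  fixes t b z :: real assumes t: "t \<ge> 0" and b: "b > 0" and z: "z > 0"
  shows "1 - b * z / ((t + b) * (t + z)) \<le> t * (1 / (t + b) + b / (t + sqrt (b * z))\<^sup>2)"
proof -
  have pos: "t + b > 0" "t + z > 0" "t + sqrt (b * z) > 0"
    using t b z by (simp_all add: add_nonneg_pos)
  have frac_eq: "1 - b * z / (P * Q) = t * (1 / P + b / (P * Q))"
    if "P > 0" "Q > 0" "P * Q - b * z = t * (Q + b)" for P Q
  proof -
    have "1 - b * z / (P * Q) = (P * Q - b * z) / (P * Q)"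
      using that(1,2) by (simp add: field_simps)
    also have "\<dots> = t * (1 / P + b / (P * Q))"
      unfolding that(3) using that(1,2) by (simp add: field_simps)
    finally show ?thesis .
  qed
  have "1 - b * z / ((t + b) * (t + z)) = t * (1 / (t + b) + b / ((t + b) * (t + z)))"
    using pos by (intro frac_eq) (simp_all add: algebra_simps)
  also have "b / ((t + b) * (t + z)) \<le> b / (t + sqrt (b * z))\<^sup>2"
    using add_sqrt_mult_sq_le[of t b z] pos t b z by (intro divide_left_mono) auto
  finally show ?thesis
    using t by (simp add: mult_left_mono)
qed

section \<open>The weight and the defect integral\<close>

definition rd_weight :: "real \<Rightarrow> real \<Rightarrow> real \<Rightarrow> real" where
  "rd_weight y z t = 1 / (sqrt ((t + y) * (t + z)) * (t + z))"

lemma rd_weight_pos: "t \<ge> 0 \<Longrightarrow> y > 0 \<Longrightarrow> z > 0 \<Longrightarrow> rd_weight y z t > 0"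
  by (simp add: rd_weight_def)

lemma rd_weight_le:
  fixes t y z :: real assumes "t \<ge> 0" "y > 0" "z > 0"
  shows "rd_weight y z t \<le> 1 / ((t + sqrt (y * z)) * (t + z))"
proof -
  have "t + sqrt (y * z) \<le> sqrt ((t + y) * (t + z))"
    using add_sqrt_mult_sq_le[of t y z] assms by (intro real_le_rsqrt) auto
  moreover have "0 < sqrt (y * z)"
    using assms by simp
  ultimately show ?thesis
    unfolding rd_weight_def using assms
    by (intro divide_left_mono mult_right_mono mult_pos_pos add_nonneg_pos) auto
qed

lemma rd_weight_ge:
  fixes t y z :: real assumes "t \<ge> 0" "y > 0" "z > 0"
  defines "a \<equiv> (y + z) / 2" and "g \<equiv> sqrt (y * z)"
  shows "1 / ((a / g * t + g) * (t + z)) \<le> rd_weight y z t"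
proof -
  have "0 < g" "0 \<le> a / g * t"
    using assms by (simp_all add: a_def g_def)
  then have "0 < a / g * t + g"
    by simp
  moreover have "0 < sqrt ((t + y) * (t + z))"
    using assms by simp
  ultimately show ?thesis
    unfolding rd_weight_def using sqrt_mult_add_le[of t y z, folded a_def g_def] assms
    by (intro divide_left_mono mult_right_mono mult_pos_pos) auto
qed

lemma carlson_RD_integrand_eq:
  fixes t x y z :: real assumes "t > 0" "x \<ge> 0" "y > 0" "z > 0"
  shows "1 / (sqrt ((t + x) * (t + y)) * (t + z) powr (3/2)) = rd_weight y z t / sqrt (t + x)"
proof -
  have "(t + z) powr (3/2) = (t + z) powr 1 * (t + z) powr (1/2)"
    by (subst powr_add[symmetric]) simp
  then have "(t + z) powr (3/2) = (t + z) * sqrt (t + z)"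
    using assms by (simp add: powr_half_sqrt)
  then show ?thesis
    using assms by (simp add: rd_weight_def real_sqrt_mult mult_ac)
qed

lemma rd_integrand_dominated:
  fixes t x y z :: real assumes t: "t > 0" and x: "x \<ge> 0" and y: "y > 0" and z: "z > 0"
  shows "\<bar>rd_weight y z t / sqrt (t + x)\<bar> \<le> 1 / z * (1 / (sqrt t * (t + sqrt (y * z))))"
proof -
  define g where "g = sqrt (y * z)"
  have g: "g > 0"
    using y z by (simp add: g_def)
  have "rd_weight y z t / sqrt (t + x) \<le> rd_weight y z t / sqrt t"
    using rd_weight_pos[of t y z] t x y z by (intro divide_left_mono) auto
  also have "\<dots> \<le> 1 / ((t + g) * z) / sqrt t"
  proof (intro divide_right_mono)
    have "1 / ((t + g) * (t + z)) \<le> 1 / ((t + g) * z)"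
      using t g z by (intro divide_left_mono mult_left_mono mult_pos_pos) auto
    then show "rd_weight y z t \<le> 1 / ((t + g) * z)"
      using rd_weight_le[of t y z] t y z unfolding g_def by linarith
  qed (use t in simp)
  also have "\<dots> = 1 / z * (1 / (sqrt t * (t + g)))"
    by (simp add: mult_ac)
  finally show ?thesis
    using rd_weight_pos[of t y z] t x y z by (simp add: g_def)
qed

lemma carlson_RD_has_integral:
  fixes x y z :: real assumes x: "x \<ge> 0" and y: "y > 0" and z: "z > 0"
  shows "((\<lambda>t. rd_weight y z t / sqrt (t + x)) has_integral 2 / 3 * carlson_RD x y z) {0<..}"
proof -
  have Ioi_lebesgue: "{0::real<..} \<in> sets lebesgue"
    by simp
  have integrable: "(\<lambda>t. rd_weight y z t / sqrt (t + x)) integrable_on {0<..}"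
  proof (rule measurable_bounded_by_integrable_imp_integrable_real[OF _ _ _ Ioi_lebesgue])
    show "(\<lambda>t. rd_weight y z t / sqrt (t + x)) \<in> borel_measurable (lebesgue_on {0<..})"
      using x y z
      by (intro continuous_imp_measurable_on_sets_lebesgue)
         (auto simp: rd_weight_def intro!: continuous_intros)
    have "sqrt (y * z) > 0"
      using y z by simp
    then show "(\<lambda>t. 1 / z * (1 / (sqrt t * (t + sqrt (y * z))))) integrable_on {0<..}"
      using has_integral_mult_right[OF has_integral_inv_sqrt_mult_add] by blast
  qed (use rd_integrand_dominated x y z in simp)
  have "integral {0<..} (\<lambda>t. 1 / (sqrt ((t + x) * (t + y)) * (t + z) powr (3/2)))
      = integral {0<..} (\<lambda>t. rd_weight y z t / sqrt (t + x))"
    using carlson_RD_integrand_eq x y z by (intro integral_cong) simp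
  then show ?thesis
    using integrable unfolding carlson_RD_def by (simp add: integrable_integral)
qed

lemma carlson_RD_diff_has_integral:
  fixes x y z :: real assumes "x \<ge> 0" "y > 0" "z > 0"
  shows "((\<lambda>t. (1 / sqrt t - 1 / sqrt (t + x)) * rd_weight y z t)
           has_integral 2 / 3 * (carlson_RD 0 y z - carlson_RD x y z)) {0<..}"
proof -
  have "((\<lambda>t. rd_weight y z t / sqrt (t + 0) - rd_weight y z t / sqrt (t + x))
           has_integral 2 / 3 * carlson_RD 0 y z - 2 / 3 * carlson_RD x y z) {0<..}"
    using assms by (intro has_integral_diff carlson_RD_has_integral) auto
  then show ?thesis
    unfolding right_diff_distrib by (rule has_integral_eq[rotated]) (simp add: left_diff_distrib)
qed

section \<open>Two-sided bounds on the defect\<close>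

lemma rd_integrand_upper:
  fixes t x y z c :: real
  assumes t: "t > 0" and x: "x \<ge> 0" and y: "y > 0" and z: "z > 0"
  defines "g \<equiv> sqrt (y * z)"
  assumes c: "c > 0" and c_ge: "g * z / (g + z) \<le> c"
  shows "(1 / sqrt t - 1 / sqrt (t + x)) * rd_weight y z t
           \<le> 1 / (g * z) * ((1 / sqrt t - 1 / sqrt (t + x)) - x / 2 * (sqrt t / ((t + x) * (t + c))))"
proof -
  define f0 where "f0 = 1 / (g * z)"
  define p where "p = 1 / sqrt t - 1 / sqrt (t + x)"
  have g: "g > 0"
    using y z by (simp add: g_def)
  have p_nonneg: "0 \<le> p" and p_ge: "x / (2 * sqrt t * (t + x)) \<le> p"
    using inv_sqrt_diff_bounds(1,2)[OF t x] by (simp_all add: p_def)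
  have "rd_weight y z t \<le> f0 * (c / (t + c))"
    using rd_weight_le[of t y z] inv_mult_add_le_frac[OF _ g z c c_ge, of t] t y z
    unfolding f0_def g_def by linarith
  then have "p * rd_weight y z t \<le> p * (f0 * (c / (t + c)))"
    using p_nonneg by (rule mult_left_mono)
  also have "\<dots> = f0 * (p - p * (t / (t + c)))"
    using t c by (simp add: field_simps)
  also have "\<dots> \<le> f0 * (p - x / (2 * sqrt t * (t + x)) * (t / (t + c)))"
    using p_ge t c g z by (intro mult_left_mono diff_left_mono mult_right_mono) (auto simp: f0_def)
  also have "x / (2 * sqrt t * (t + x)) * (t / (t + c)) = x / 2 * (t / sqrt t / ((t + x) * (t + c)))"
    using t x c by (simp add: field_simps)
  also have "t / sqrt t = sqrt t"
    using t by (simp add: real_div_sqrt)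
  finally show ?thesis
    by (simp add: p_def f0_def)
qed

lemma carlson_RD_gap_le:
  fixes x y z c :: real
  assumes x: "x > 0" and y: "y > 0" and z: "z > 0"
  defines "g \<equiv> sqrt (y * z)"
  assumes c: "c > 0" and c_ge: "g * z / (g + z) \<le> c"
  shows "carlson_RD 0 y z - carlson_RD x y z
           \<le> 3 / 2 * (1 / (g * z) * (2 * sqrt x - x / 2 * (pi / (sqrt x + sqrt c))))"
proof -
  have "((\<lambda>t. 1 / (g * z) * ((1 / sqrt t - 1 / sqrt (t + x)) - x / 2 * (sqrt t / ((t + x) * (t + c)))))
      has_integral 1 / (g * z) * (2 * sqrt x - x / 2 * (pi / (sqrt x + sqrt c)))) {0<..}"
    using x c
    by (intro has_integral_mult_right has_integral_diff has_integral_inv_sqrt_diff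
        has_integral_sqrt_div_add_mult_add) auto
  then have "2 / 3 * (carlson_RD 0 y z - carlson_RD x y z)
      \<le> 1 / (g * z) * (2 * sqrt x - x / 2 * (pi / (sqrt x + sqrt c)))"
    using x y z c c_ge rd_integrand_upper[of _ x y z c]
    by (intro has_integral_le[OF carlson_RD_diff_has_integral]) (auto simp: g_def)
  moreover have "d \<le> 3 / 2 * e" if "2 / 3 * d \<le> e" for d e :: real
    using that by linarith
  ultimately show ?thesis
    by blast
qed

lemma rd_integrand_lower:
  fixes t x y z :: real
  assumes t: "t > 0" and x: "x \<ge> 0" and y: "y > 0" and z: "z > 0"
  defines "a \<equiv> (y + z) / 2" and "g \<equiv> sqrt (y * z)"
  defines "b \<equiv> g * g / a"
  defines "m \<equiv> sqrt (b * z)"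
  shows "1 / (g * z) * ((1 / sqrt t - 1 / sqrt (t + x))
             - x / 2 * (1 / (sqrt t * (t + b)) + b * (1 / (sqrt t * (t + m)\<^sup>2))))
           \<le> (1 / sqrt t - 1 / sqrt (t + x)) * rd_weight y z t"
proof -
  define f0 where "f0 = 1 / (g * z)"
  define p where "p = 1 / sqrt t - 1 / sqrt (t + x)"
  define Q where "Q = 1 / (t + b) + b / (t + m)\<^sup>2"
  have g: "g > 0" and a: "a > 0" and f0: "f0 > 0"
    using y z by (simp_all add: g_def a_def f0_def)
  have b: "b > 0" and m: "m > 0"
    using g a z by (simp_all add: b_def m_def)
  have p_nonneg: "0 \<le> p" and p_le: "p \<le> x / (2 * t * sqrt t)"
    using inv_sqrt_diff_bounds(1,3)[OF t x] by (simp_all add: p_def)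
  have Q_nonneg: "0 \<le> Q"
    using t b m by (simp add: Q_def)
  (* p w = f0 p - p (f0 - w); the factor t in f0 - w <= f0 t Q offsets the t^(-3/2)
     in p <= x / (2 t sqrt t). *)
  have "1 / ((a / g * t + g) * (t + z)) = f0 * (b * z / ((t + b) * (t + z)))"
    using g a z t b by (simp add: f0_def b_def field_simps)
  then have "f0 - rd_weight y z t \<le> f0 * (1 - b * z / ((t + b) * (t + z)))"
    using rd_weight_ge[of t y z, folded a_def g_def] t y z by (simp add: right_diff_distrib)
  also have "\<dots> \<le> f0 * (t * Q)"
    using one_sub_frac_le[of t b z] t b z f0 by (intro mult_left_mono) (simp_all add: Q_def m_def)
  finally have "p * (f0 - rd_weight y z t) \<le> p * (f0 * (t * Q))"
    using p_nonneg by (rule mult_left_mono)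
  also have "\<dots> \<le> x / (2 * t * sqrt t) * (f0 * (t * Q))"
    using p_le f0 t Q_nonneg by (intro mult_right_mono) auto
  also have "\<dots> = f0 * (x / 2 * (Q / sqrt t))"
    using t by (simp add: field_simps)
  finally have "f0 * (p - x / 2 * (Q / sqrt t)) \<le> p * rd_weight y z t"
    by (simp add: algebra_simps)
  moreover have "Q / sqrt t = 1 / (sqrt t * (t + b)) + b * (1 / (sqrt t * (t + m)\<^sup>2))"
    by (simp add: Q_def add_divide_distrib mult.commute)
  ultimately show ?thesis
    by (simp add: p_def f0_def)
qed

lemma carlson_RD_gap_ge:
  fixes x y z :: real
  assumes x: "x > 0" and y: "y > 0" and z: "z > 0"
  defines "a \<equiv> (y + z) / 2" and "g \<equiv> sqrt (y * z)"
  defines "b \<equiv> g * g / a"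
  defines "m \<equiv> sqrt (b * z)"
  shows "3 / 2 * (1 / (g * z) * (2 * sqrt x - x / 2 * (pi / sqrt b + b * (pi / (2 * m * sqrt m)))))
           \<le> carlson_RD 0 y z - carlson_RD x y z"
proof -
  have b: "b > 0" and m: "m > 0"
    using y z by (simp_all add: a_def g_def b_def m_def)
  have "((\<lambda>t. 1 / (g * z) * ((1 / sqrt t - 1 / sqrt (t + x))
        - x / 2 * (1 / (sqrt t * (t + b)) + b * (1 / (sqrt t * (t + m)\<^sup>2)))))
      has_integral 1 / (g * z) * (2 * sqrt x - x / 2 * (pi / sqrt b + b * (pi / (2 * m * sqrt m))))) {0<..}"
    using x b m
    by (intro has_integral_mult_right has_integral_diff has_integral_add has_integral_inv_sqrt_diff
        has_integral_inv_sqrt_mult_add has_integral_inv_sqrt_mult_add_sq) auto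
  then have "1 / (g * z) * (2 * sqrt x - x / 2 * (pi / sqrt b + b * (pi / (2 * m * sqrt m))))
      \<le> 2 / 3 * (carlson_RD 0 y z - carlson_RD x y z)"
    using x y z rd_integrand_lower[of _ x y z]
    by (intro has_integral_le[OF _ carlson_RD_diff_has_integral]) (auto simp: a_def g_def b_def m_def)
  moreover have "3 / 2 * e \<le> d" if "e \<le> 2 / 3 * d" for d e :: real
    using that by linarith
  ultimately show ?thesis
    by blast
qed

lemma theta_max_div_sqrt_eq:
  fixes y z :: real assumes y: "y > 0" and z: "z > 0"
  defines "a \<equiv> (y + z) / 2" and "g \<equiv> sqrt (y * z)"
  shows "(a / g) powr (3/2) * (1 + y / a) / sqrt a = (a + y) / (g * sqrt g)"
proof -
  have a: "a > 0" and g: "g > 0"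
    using y z by (simp_all add: a_def g_def)
  have "(a / g) powr (3/2) = (a / g) powr 1 * (a / g) powr (1/2)"
    by (subst powr_add[symmetric]) simp
  also have "\<dots> = a / g * (sqrt a / sqrt g)"
    using a g by (simp add: powr_half_sqrt real_sqrt_divide)
  finally show ?thesis
    using a g by (simp add: field_simps)
qed

lemma theta_max_gt_one:
  fixes y z :: real assumes y: "y > 0" and z: "z > 0"
  defines "a \<equiv> (y + z) / 2" and "g \<equiv> sqrt (y * z)"
  shows "1 < (a / g) powr (3/2) * (1 + y / a)"
proof -
  have a: "a > 0" and g: "g > 0" and "g \<le> a"
    using y z arith_geo_mean_sqrt[of y z] by (simp_all add: a_def g_def)
  then have "1 \<le> (a / g) powr (3/2)"
    by (intro ge_one_powr_ge_zero) auto
  have "1 < 1 + y / a"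
    using y a by simp
  also have "\<dots> \<le> (a / g) powr (3/2) * (1 + y / a)"
    using \<open>1 \<le> (a / g) powr (3/2)\<close> \<open>1 < 1 + y / a\<close> by (simp add: mult_le_cancel_right1)
  finally show ?thesis .
qed

lemma gap_ge_second_constant_lt:
  fixes y z :: real assumes y: "y > 0" and z: "z > 0"
  defines "a \<equiv> (y + z) / 2" and "g \<equiv> sqrt (y * z)"
  defines "b \<equiv> g * g / a"
  defines "m \<equiv> sqrt (b * z)"
  shows "b / (2 * m * sqrt m) < y / (g * sqrt g)"
proof -
  have a: "a > 0" and g: "g > 0" and gg: "g * g = y * z"
    using y z by (simp_all add: a_def g_def)
  have b: "b > 0" "b = y * z / a"
    using a y z gg by (simp_all add: b_def)
  have m: "m > 0" "m\<^sup>2 = b * z"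
    using b(1) z by (simp_all add: m_def)
  (* Fourth powers clear the roots: the claim becomes b < 16 y, whereas in fact b < 2 y. *)
  have "(b * (g * sqrt g)) ^ 4 = (b * y * z) ^ 3 * b"
  proof -
    have "(g * sqrt g) ^ 4 = (g * g) ^ 3"
      using g by (simp add: power_mult_distrib sqrt_pow4 flip: power_add power_mult)
    then show ?thesis
      unfolding power_mult_distrib[of b] gg by (simp add: power4_eq_xxxx power3_eq_cube)
  qed
  also have "\<dots> < (b * y * z) ^ 3 * (16 * y)"
  proof (rule mult_strict_left_mono)
    have "z < 16 * a"
      using y z by (simp add: a_def)
    then have "y * z < 16 * y * a"
      using y by simp
    then show "b < 16 * y"
      using a by (simp add: b(2) pos_divide_less_eq)
  qed (use b(1) y z in simp)
  also have "\<dots> = (y * (2 * m * sqrt m)) ^ 4"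
  proof -
    have "(2 * m * sqrt m) ^ 4 = 16 * (m\<^sup>2) ^ 3"
      using m(1) by (simp add: power_mult_distrib sqrt_pow4 flip: power_add power_mult)
    then show ?thesis
      unfolding power_mult_distrib[of y] m(2) by (simp add: power4_eq_xxxx power3_eq_cube)
  qed
  finally have "b * (g * sqrt g) < y * (2 * m * sqrt m)"
    by (rule power_less_imp_less_base) (use y m in simp)
  then show ?thesis
    using g m by (simp add: divide_simps mult_ac)
qed

lemma gap_ge_constant_lt_theta_max:
  fixes y z :: real assumes y: "y > 0" and z: "z > 0"
  defines "a \<equiv> (y + z) / 2" and "g \<equiv> sqrt (y * z)"
  defines "b \<equiv> g * g / a"
  defines "m \<equiv> sqrt (b * z)"
  shows "1 / sqrt b + b / (2 * m * sqrt m) < (a / g) powr (3/2) * (1 + y / a) / sqrt a"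
proof -
  have a: "a > 0" and g: "g > 0" and "g \<le> a"
    using y z arith_geo_mean_sqrt[of y z] by (simp_all add: a_def g_def)
  have "sqrt a * sqrt g \<le> sqrt a * sqrt a"
    using \<open>g \<le> a\<close> g by (intro mult_left_mono) auto
  then have "sqrt a / g \<le> a / (g * sqrt g)"
    using a g by (simp add: field_simps)
  moreover have "1 / sqrt b = sqrt a / g"
    using a g by (simp add: b_def real_sqrt_divide)
  ultimately have "1 / sqrt b + b / (2 * m * sqrt m) < a / (g * sqrt g) + y / (g * sqrt g)"
    using gap_ge_second_constant_lt[OF y z, folded a_def g_def, folded b_def, folded m_def]
    by linarith
  then show ?thesis
    using theta_max_div_sqrt_eq[OF y z] by (simp add: a_def g_def add_divide_distrib)
qed

lemma rd_correction_eq: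
  fixes x a k \<theta> :: real assumes "x \<ge> 0" "a > 0"
  shows "3 / 2 * (1 / k * (2 * sqrt x - x / 2 * (pi * \<theta> / sqrt a)))
           = - (3 * sqrt x / k * (-1 + pi * \<theta> / 4 * sqrt (x / a)))"
  using assms by (simp add: real_sqrt_divide field_simps sqrt_mult_sqrt_mult minus_divide_left)

lemma rd_correction_strict_mono:
  fixes x f P Q :: real assumes "x > 0" "f > 0" "P < Q"
  shows "3 / 2 * (f * (2 * sqrt x - x / 2 * Q)) < 3 / 2 * (f * (2 * sqrt x - x / 2 * P))"
  using assms by simp

lemma carlson_RD_sub_gt:
  fixes x y z :: real assumes x: "x > 0" and y: "y > 0" and z: "z > 0"
  defines "a \<equiv> (y + z) / 2" and "g \<equiv> sqrt (y * z)"
  shows "3 * sqrt x / (g * z) * (-1 + pi * (1 / (1 + sqrt (x / a))) / 4 * sqrt (x / a))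
           < carlson_RD x y z - carlson_RD 0 y z"
proof -
  define c where "c = g * z / (g + z)"
  have g: "g > 0" and a: "a > 0" and "g \<le> a"
    using y z arith_geo_mean_sqrt[of y z] by (simp_all add: g_def a_def)
  have c: "c > 0" and "c < g"
    using g z by (simp_all add: c_def pos_divide_less_eq algebra_simps)
  then have "sqrt c < sqrt a"
    using \<open>g \<le> a\<close> by simp
  then have "pi / (sqrt x + sqrt a) < pi / (sqrt x + sqrt c)"
    using x c by (intro divide_strict_left_mono) (auto intro!: mult_pos_pos add_pos_pos)
  moreover have "(1 + sqrt (x / a)) * sqrt a = sqrt x + sqrt a"
    using a by (simp add: real_sqrt_divide distrib_right)
  ultimately have "pi * (1 / (1 + sqrt (x / a))) / sqrt a < pi / (sqrt x + sqrt c)"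
    by (simp add: divide_divide_eq_left)
  then have "3 / 2 * (1 / (g * z) * (2 * sqrt x - x / 2 * (pi / (sqrt x + sqrt c))))
      < 3 / 2 * (1 / (g * z) * (2 * sqrt x - x / 2 * (pi * (1 / (1 + sqrt (x / a))) / sqrt a)))"
    using x g z by (intro rd_correction_strict_mono) auto
  with carlson_RD_gap_le[OF x y z c, folded g_def]
  have "carlson_RD 0 y z - carlson_RD x y z
      < 3 / 2 * (1 / (g * z) * (2 * sqrt x - x / 2 * (pi * (1 / (1 + sqrt (x / a))) / sqrt a)))"
    by (simp add: c_def)
  then show ?thesis
    unfolding rd_correction_eq[OF less_imp_le[OF x] a] by linarith
qed

lemma carlson_RD_sub_lt:
  fixes x y z :: real assumes x: "x > 0" and y: "y > 0" and z: "z > 0"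
  defines "a \<equiv> (y + z) / 2" and "g \<equiv> sqrt (y * z)"
  shows "carlson_RD x y z - carlson_RD 0 y z
           < 3 * sqrt x / (g * z) * (-1 + pi * ((a / g) powr (3/2) * (1 + y / a)) / 4 * sqrt (x / a))"
proof -
  define b where "b = g * g / a"
  define m where "m = sqrt (b * z)"
  define U where "U = (a / g) powr (3/2) * (1 + y / a)"
  have g: "g > 0" and a: "a > 0"
    using y z by (simp_all add: g_def a_def)
  have "1 / sqrt b + b / (2 * m * sqrt m) < U / sqrt a"
    using gap_ge_constant_lt_theta_max[OF y z, folded a_def g_def, folded b_def, folded m_def U_def] .
  from mult_strict_left_mono[OF this pi_gt_zero]
  have "pi / sqrt b + b * (pi / (2 * m * sqrt m)) < pi * U / sqrt a"
    by (simp add: distrib_left mult.commute)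
  then have "3 / 2 * (1 / (g * z) * (2 * sqrt x - x / 2 * (pi * U / sqrt a)))
      < 3 / 2 * (1 / (g * z) * (2 * sqrt x - x / 2 * (pi / sqrt b + b * (pi / (2 * m * sqrt m)))))"
    using x g z by (intro rd_correction_strict_mono) auto
  also have "\<dots> \<le> carlson_RD 0 y z - carlson_RD x y z"
    using carlson_RD_gap_ge[OF x y z, folded a_def g_def, folded b_def, folded m_def] .
  finally show ?thesis
    unfolding U_def[symmetric] rd_correction_eq[OF less_imp_le[OF x] a] by linarith
qed

lemma affine_eq_between:
  fixes C s L U D :: real
  assumes "C > 0" "s > 0" "C * (-1 + L * s) < D" "D < C * (-1 + U * s)"
  shows "\<exists>\<theta>. L < \<theta> \<and> \<theta> < U \<and> D = C * (-1 + \<theta> * s)"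
proof (intro exI conjI)
  define \<theta> where "\<theta> = (D / C + 1) / s"
  show "D = C * (-1 + \<theta> * s)"
    using assms by (simp add: \<theta>_def)
  show "L < \<theta>" "\<theta> < U"
    using assms by (simp_all add: \<theta>_def field_simps)
qed

theorem mainTheorem9:
  fixes x y z :: real
  assumes "x \<ge> 0" and "y > 0" and "z > 0"
  defines "a \<equiv> (y + z) / 2" and "g \<equiv> sqrt (y * z)"
  shows "\<exists>\<theta>::real. 1 / (1 + sqrt (x / a)) < \<theta> \<and> \<theta> < (a / g) powr (3/2) * (1 + y / a) \<and>
           carlson_RD x y z = carlson_RD 0 y z + 3 * sqrt x / (g * z) * (-1 + pi * \<theta> / 4 * sqrt (x / a))"
proof (cases "x = 0")
  case True
  define U where "U = (a / g) powr (3/2) * (1 + y / a)"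
  have "1 < U"
    using theta_max_gt_one[OF assms(2,3)] by (simp add: U_def a_def g_def)
  then show ?thesis
    unfolding U_def[symmetric] using True by (intro exI[of _ "(1 + U) / 2"]) simp
next
  case False
  then have x: "x > 0"
    using assms(1) by simp
  have "a > 0" "g > 0"
    using assms by (simp_all add: a_def g_def)
  then have C: "3 * sqrt x / (g * z) > 0" and s: "pi / 4 * sqrt (x / a) > 0"
    using x assms by simp_all
  have shape: "pi * t / 4 * sqrt (x / a) = t * (pi / 4 * sqrt (x / a))" for t
    by simp
  obtain \<theta> where "1 / (1 + sqrt (x / a)) < \<theta>" "\<theta> < (a / g) powr (3/2) * (1 + y / a)"
    and "carlson_RD x y z - carlson_RD 0 y z = 3 * sqrt x / (g * z) * (-1 + \<theta> * (pi / 4 * sqrt (x / a)))"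
    using affine_eq_between[OF C s]
      carlson_RD_sub_gt[OF x assms(2,3), folded a_def g_def, unfolded shape]
      carlson_RD_sub_lt[OF x assms(2,3), folded a_def g_def, unfolded shape]
    by blast
  then show ?thesis
    unfolding shape by (intro exI[of _ \<theta>]) auto
qed

end
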